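(* $\mathrm T_s(\mathbb F) \not\subseteq \mathsf{AC}^0$. In particular, the language $\mathrm{MAJ}=\{w\in\{0,1\}^+ : \#_1(w) > \#_0(w)\}$, where $\#_\sigma(w)$ is the number of occurrences of $\sigma$ in $w$, is recognized by a transformer over floats with saturated attention and size-preserving embedding and activation functions, yet is not in $\mathsf{AC}^0$.
   Context: Datatypes. All values are binary strings. A float is a rational number whose denominator is a power of $2$, encoded as a sign bit together with a pair $\langle p,q\rangle$ of unsigned binary integers (value $(2s-1)p/q$, $q$ a power of $2$); addition and multiplication are exact rational operations (which yield floats). Division is implemented via an approximate inverse: for an integer $p$, $p^{-1}$ has numerator $\lfloor 2^{|p|}/p\rfloor$ and denominator $2^{|p|}$; dividing by a float $\langle p,q\rangle$ multiplies by numerator $\lfloor 2^{|p|}/p\rfloor\cdot q$ over denominator $2^{|p|}$. The size $|x|$ of a value is its length in bits. A function $f$ on bitstrings is size-preserving if there are constants $c,N$ with $|f(x)|\le c|x|$ whenever $|x|\ge N$; $\mathcal S$ is the set of such functions. Saturated attention: for $a\in\mathbb D^n$, $\mathcal M(a)=\{i:a_i=\max_j a_j\}$, $s(a)_j=1/|\mathcal M(a)|$ for $j\in\mathcal M(a)$, else $0$. Transformer over datatype $\mathbb D$ with alphabet $\Sigma$, dimension $k$, $L$ layers, $H$ heads: embedding $\phi:\Sigma\times\mathbb N\to\mathbb D^k$ in $\mathcal S$, scoring functions $s_{\ell,h}:\mathbb D^k\times\mathbb D^k\to\mathbb D$, activation functions $f_\ell\in\mathcal S$. On $w\in\Sigma^n$: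 $v_{0,i}=\phi(w_i,i)$; $a_{\ell,h,i,j}=s_{\ell,h}(v_{\ell,i},v_{\ell,j})$; $b_{\ell+1,h,i}=\sum_j\alpha(a_{\ell,h,i,\cdot})_j v_{\ell,j}$ (arithmetic in $\mathbb D$); $v_{\ell+1,i}=f_{\ell+1}(v_{\ell,i},b_{\ell+1,1,i},\dots,b_{\ell+1,H,i})$. It recognizes $L$ if for a rational affine map $W,b$: $W v_{L,1}(w)+b>0\iff w\in L$. $\mathrm T_\alpha(\mathbb D)$ is the class of languages so recognized with attention $\alpha$, datatype $\mathbb D$, some $k$, and embedding/activation functions in $\mathcal S$. $\mathsf{AC}^0$ is the class of languages $L\subseteq\{0,1\}^*$ recognized by a (non-uniform) family of circuits $\{C_n\}$, with unbounded fan-in AND/OR gates (inputs are the bits and their negations), polynomial size and constant depth, where $C_{|w|}(w)=1\iff w\in L$. *)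

theory Defs
  imports Complex_Main
begin

text \<open>A float is a sign bit together with a pair of unsigned binary integers p, q, where q
  is a power of 2.  We store q by its exponent: Flt s p e encodes the pair (p, 2^e).\<close>

datatype dfloat = Flt bool nat nat

fun bitlen :: "nat \<Rightarrow> nat" where
  "bitlen n = (if n < 2 then 1 else Suc (bitlen (n div 2)))"

text \<open>Size of a float in bits: sign bit + bits of p + bits of q = 2^e (which has e+1 bits).\<close>
fun fsize :: "dfloat \<Rightarrow> nat" where
  "fsize (Flt s p e) = 1 + bitlen p + Suc e"

definition vsize :: "dfloat list \<Rightarrow> nat" where
  "vsize v = sum_list (map fsize v)"

fun fval :: "dfloat \<Rightarrow> rat" where
  "fval (Flt s p e) = (if s then 1 else -1) * of_nat p / 2 ^ e"

text \<open>Normal form of the result of an exact operation (lowest terms; zero gets sign bit 1).\<close>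
fun fnorm :: "bool \<Rightarrow> nat \<Rightarrow> nat \<Rightarrow> dfloat" where
  "fnorm s p 0 = Flt (s \<or> p = 0) p 0"
| "fnorm s p (Suc e) = (if even p then fnorm s (p div 2) e else Flt (s \<or> p = 0) p (Suc e))"

definition fzero :: dfloat where "fzero = Flt True 0 0"

fun fadd :: "dfloat \<Rightarrow> dfloat \<Rightarrow> dfloat" where
  "fadd (Flt s1 p1 e1) (Flt s2 p2 e2) =
     (let e = max e1 e2;
          a = (if s1 then 1 else -1) * int p1 * 2 ^ (e - e1)
            + (if s2 then 1 else -1) * int p2 * 2 ^ (e - e2)
      in fnorm (a \<ge> 0) (nat \<bar>a\<bar>) e)"

fun fmul :: "dfloat \<Rightarrow> dfloat \<Rightarrow> dfloat" where
  "fmul (Flt s1 p1 e1) (Flt s2 p2 e2) = fnorm (s1 = s2) (p1 * p2) (e1 + e2)"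

definition fsum :: "dfloat list \<Rightarrow> dfloat" where
  "fsum xs = foldl fadd fzero xs"

definition finv :: "nat \<Rightarrow> dfloat" where
  "finv m = Flt True (2 ^ bitlen m div m) (bitlen m)"

definition sat_weights :: "dfloat list \<Rightarrow> dfloat list" where
  "sat_weights a =
     (let vals = map fval a; mx = Max (set vals);
          M = {j. j < length a \<and> vals ! j = mx}
      in map (\<lambda>j. if j \<in> M then finv (card M) else fzero) [0..<length a])"

definition attend :: "nat \<Rightarrow> dfloat list list \<Rightarrow> dfloat list \<Rightarrow> dfloat list" where
  "attend k vs ws =
     map (\<lambda>c. fsum (map (\<lambda>j. fmul (ws ! j) ((vs ! j) ! c)) [0..<length vs])) [0..<k]"

text \<open>One layer: sc h is the scoring function of head h (h = 1..H) of this layer,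
  g the activation function of the next layer.\<close>
definition tf_layer :: "nat \<Rightarrow> nat \<Rightarrow> (nat \<Rightarrow> dfloat list \<Rightarrow> dfloat list \<Rightarrow> dfloat)
     \<Rightarrow> (dfloat list \<Rightarrow> dfloat list list \<Rightarrow> dfloat list) \<Rightarrow> dfloat list list \<Rightarrow> dfloat list list" where
  "tf_layer k H sc g vs =
     map (\<lambda>i. g (vs ! i)
                 (map (\<lambda>h. attend k vs (sat_weights (map (\<lambda>j. sc h (vs ! i) (vs ! j)) [0..<length vs])))
                      [1..<Suc H]))
         [0..<length vs]"

text \<open>States v_l = list of the vectors v_{l,1},...,v_{l,n} (list index i-1 holds position i).
  phi: embedding; s l h: scoring function of layer l, head h; f l: activation of layer l.\<close>
fun tf_states :: "nat \<Rightarrow> nat \<Rightarrow> (bool \<Rightarrow> nat \<Rightarrow> dfloat list)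
     \<Rightarrow> (nat \<Rightarrow> nat \<Rightarrow> dfloat list \<Rightarrow> dfloat list \<Rightarrow> dfloat)
     \<Rightarrow> (nat \<Rightarrow> dfloat list \<Rightarrow> dfloat list list \<Rightarrow> dfloat list)
     \<Rightarrow> nat \<Rightarrow> bool list \<Rightarrow> dfloat list list" where
  "tf_states k H phi s f 0 w = map (\<lambda>i. phi (w ! i) (Suc i)) [0..<length w]"
| "tf_states k H phi s f (Suc l) w = tf_layer k H (s l) (f (Suc l)) (tf_states k H phi s f l w)"

text \<open>Size-preserving embedding (input (sigma, i) has size 1 + |i|, sigma a single bit).\<close>
definition size_pres_emb :: "(bool \<Rightarrow> nat \<Rightarrow> dfloat list) \<Rightarrow> bool" where
  "size_pres_emb phi \<longleftrightarrow> (\<exists>c N::nat. \<forall>\<sigma> i. N \<le> 1 + bitlen i \<longrightarrow> vsize (phi \<sigma> i) \<le> c * (1 + bitlen i))"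

definition size_pres_act :: "nat \<Rightarrow> nat \<Rightarrow> (dfloat list \<Rightarrow> dfloat list list \<Rightarrow> dfloat list) \<Rightarrow> bool" where
  "size_pres_act k H g \<longleftrightarrow> (\<exists>c N::nat. \<forall>v bs. length v = k \<longrightarrow> length bs = H \<longrightarrow> (\<forall>b\<in>set bs. length b = k) \<longrightarrow>
       N \<le> vsize v + sum_list (map vsize bs) \<longrightarrow>
       vsize (g v bs) \<le> c * (vsize v + sum_list (map vsize bs)))"

text \<open>T_s(F) over the alphabet {0,1} (False = 0, True = 1); languages are subsets of {0,1}^+.\<close>
definition T_sat_float :: "bool list set set" where
  "T_sat_float = {L. [] \<notin> L \<and>
     (\<exists>(k::nat) (nL::nat) (H::nat) phi s f (W::rat list) (b::rat).
        length W = k \<and>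
        size_pres_emb phi \<and> (\<forall>\<sigma> i. length (phi \<sigma> i) = k) \<and>
        (\<forall>l\<in>{1..nL}. size_pres_act k H (f l) \<and>
            (\<forall>v bs. length v = k \<longrightarrow> length bs = H \<longrightarrow> (\<forall>x\<in>set bs. length x = k) \<longrightarrow>
                   length (f l v bs) = k)) \<and>
        (\<forall>w. w \<noteq> [] \<longrightarrow>
           ((\<Sum>c<k. W ! c * fval (hd (tf_states k H phi s f nL w) ! c)) + b > 0 \<longleftrightarrow> w \<in> L)))}"

text \<open>A circuit is a nonempty list of gates; a gate refers to earlier gates by index;
  the output is the last gate.  Lit i True = x_i, Lit i False = not x_i (0-indexed bits).\<close>
datatype gate = Lit nat bool | AndG "nat list" | OrG "nat list"

fun gate_val :: "bool list \<Rightarrow> bool list \<Rightarrow> gate \<Rightarrow> bool" where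
  "gate_val w vs (Lit i b) = (w ! i = b)"
| "gate_val w vs (AndG js) = (\<forall>j\<in>set js. vs ! j)"
| "gate_val w vs (OrG js) = (\<exists>j\<in>set js. vs ! j)"

definition circ_out :: "gate list \<Rightarrow> bool list \<Rightarrow> bool" where
  "circ_out C w = last (foldl (\<lambda>vs g. vs @ [gate_val w vs g]) [] C)"

fun gate_depth :: "nat list \<Rightarrow> gate \<Rightarrow> nat" where
  "gate_depth ds (Lit i b) = 0"
| "gate_depth ds (AndG js) = Suc (foldr max (map (nth ds) js) 0)"
| "gate_depth ds (OrG js) = Suc (foldr max (map (nth ds) js) 0)"

definition circ_depth :: "gate list \<Rightarrow> nat" where
  "circ_depth C = foldr max (foldl (\<lambda>ds g. ds @ [gate_depth ds g]) [] C) 0"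

fun gate_size :: "gate \<Rightarrow> nat" where
  "gate_size (Lit i b) = 1"
| "gate_size (AndG js) = 1 + length js"
| "gate_size (OrG js) = 1 + length js"

definition circ_size :: "gate list \<Rightarrow> nat" where
  "circ_size C = sum_list (map gate_size C)"

definition circ_wf :: "nat \<Rightarrow> gate list \<Rightarrow> bool" where
  "circ_wf n C \<longleftrightarrow> C \<noteq> [] \<and> (\<forall>g<length C. case C ! g of
       Lit i b \<Rightarrow> i < n
     | AndG js \<Rightarrow> (\<forall>j\<in>set js. j < g)
     | OrG js \<Rightarrow> (\<forall>j\<in>set js. j < g))"

definition AC0 :: "bool list set set" where
  "AC0 = {L. \<exists>(C::nat \<Rightarrow> gate list) (d::nat) (e::nat).
            (\<forall>n. circ_wf n (C n) \<and> circ_size (C n) \<le> n ^ e + e \<and> circ_depth (C n) \<le> d) \<and>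
            (\<forall>w. circ_out (C (length w)) w \<longleftrightarrow> w \<in> L)}"

definition MAJ :: "bool list set" where
  "MAJ = {w. w \<noteq> [] \<and> count_list w True > count_list w False}"

end

theory Submission
  imports Defs "HOL-Library.Numeral_Type" "HOL-Library.FuncSet"
begin

text \<open>
  A single layer recognises MAJ: all attention scores are equal, so saturated attention
  averages the embeddings +1 and -1 of the input symbols with the positive weight finv n
  (roughly 1/n), and the sign of the result decides majority.

  MAJ is not in AC0 by the Razborov-Smolensky method over F_3, in the variables
  y_i = (-1)^(x_i). Replacing every gate by a random F_3-polynomial approximation of an OR
  (or AND), a circuit of depth d and size s agrees with a polynomial of degree (2l)^d on all
  but an s/2^l fraction of any given set of inputs. Fixing the second half of the input of a
  MAJ circuit on 4m bits yields every threshold function on n = 2m bits, and a telescoping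
  F_3-combination of these thresholds is the parity y_1 ... y_n. So a polynomial H of low
  degree D agrees with the parity on a set G containing 7/8 of {0,1}^n. On G every monomial
  y_S of degree above n/2 equals H times the monomial of the complement of S, so all 3^|G|
  functions on G are polynomials of degree at most n/2 + D; hence |G| is at most the number
  of such monomials, which the central binomial estimate bounds by less than 7/8 of 2^n.
\<close>

section \<open>A one-layer transformer recognising MAJ\<close>

lemma fval_fnorm: "fval (fnorm s p e) = (if s then 1 else -1) * of_nat p / 2 ^ e"
proof (induction e arbitrary: p)
  case (Suc e)
  then show ?case
    by (cases "even p") (auto elim!: evenE)
qed simp

lemma fval_fadd: "fval (fadd x y) = fval x + fval y"
proof (cases x; cases y)
  fix s1 p1 e1 s2 p2 e2
  assume xy: "x = Flt s1 p1 e1" "y = Flt s2 p2 e2"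
  define e where "e = max e1 e2"
  define a where "a = (if s1 then 1 else -1) * int p1 * 2 ^ (e - e1)
                    + (if s2 then 1 else -1) * int p2 * 2 ^ (e - e2)"
  have rescale: "c * (2::rat) ^ (e - e') / 2 ^ e = c / 2 ^ e'" if "e' \<le> e" for e' c
    using that by (simp add: power_diff)
  have "fval (fadd x y) = of_int a / 2 ^ e"
    by (cases "a \<ge> 0") (simp_all add: xy e_def a_def Let_def fval_fnorm)
  also have "\<dots> = fval x + fval y"
    using rescale[of e1] rescale[of e2] by (simp add: a_def xy e_def add_divide_distrib)
  finally show ?thesis .
qed

lemma fval_fmul: "fval (fmul x y) = fval x * fval y"
  by (cases x; cases y) (auto simp: fval_fnorm power_add)

lemma fval_fsum: "fval (fsum xs) = (\<Sum>x\<leftarrow>xs. fval x)"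
proof -
  have "fval (foldl fadd a xs) = fval a + (\<Sum>x\<leftarrow>xs. fval x)" for a
    by (induction xs arbitrary: a) (simp_all add: fval_fadd)
  then show ?thesis
    by (simp add: fsum_def fzero_def)
qed

lemma less_two_power_bitlen: "n < 2 ^ bitlen n"
proof (induction n rule: bitlen.induct)
  case (1 n)
  then show ?case
    by (cases "n < 2") simp_all
qed

lemma fval_finv_pos: "0 < n \<Longrightarrow> 0 < fval (finv n)"
  using less_two_power_bitlen[of n] by (simp add: finv_def div_greater_zero_iff)

definition pm_one_embedding :: "bool \<Rightarrow> nat \<Rightarrow> dfloat list" where
  "pm_one_embedding \<sigma> i = [Flt \<sigma> 1 0]"

definition constant_score :: "nat \<Rightarrow> nat \<Rightarrow> dfloat list \<Rightarrow> dfloat list \<Rightarrow> dfloat" where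
  "constant_score l h u v = fzero"

definition first_head :: "nat \<Rightarrow> dfloat list \<Rightarrow> dfloat list list \<Rightarrow> dfloat list" where
  "first_head l v bs = hd bs"

lemma sat_weights_replicate: "sat_weights (replicate n x) = replicate n (finv n)"
proof -
  have maximizers: "{j. j < length (replicate n x) \<and>
      map fval (replicate n x) ! j = Max (set (map fval (replicate n x)))} = {..<n}"
    by auto
  show ?thesis
    unfolding sat_weights_def Let_def maximizers by (simp add: list_eq_iff_nth_eq)
qed

lemma sum_list_pm_one:
  "(\<Sum>x\<leftarrow>w. if x then 1 else -1 :: rat) = of_nat (count_list w True) - of_nat (count_list w False)"
  by (induction w) auto

lemma averaging_layer_output:
  assumes "w \<noteq> []"
  shows "fval (hd (tf_states 1 1 pm_one_embedding constant_score first_head 1 w) ! 0)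
           = fval (finv (length w)) * (of_nat (count_list w True) - of_nat (count_list w False))"
proof -
  let ?n = "length w"
  let ?vs = "map (\<lambda>i. [Flt (w ! i) 1 0]) [0..<?n]"
  have "hd (tf_states 1 1 pm_one_embedding constant_score first_head 1 w)
          = attend 1 ?vs (sat_weights (replicate ?n fzero))"
    using assms by (simp add: tf_layer_def pm_one_embedding_def constant_score_def first_head_def
        hd_map map_replicate_const)
  also have "\<dots> = [fsum (map (\<lambda>j. fmul (finv ?n) (Flt (w ! j) 1 0)) [0..<?n])]"
    by (auto simp: attend_def sat_weights_replicate intro!: arg_cong[where f = fsum] map_cong)
  finally have "fval (hd (tf_states 1 1 pm_one_embedding constant_score first_head 1 w) ! 0)
                  = (\<Sum>x\<leftarrow>map ((!) w) [0..<?n]. fval (finv ?n) * (if x then 1 else -1))"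
    by (simp add: fval_fsum fval_fmul comp_def)
  then show ?thesis
    by (simp add: map_nth sum_list_const_mult sum_list_pm_one)
qed

lemma MAJ_in_T_sat_float: "MAJ \<in> T_sat_float"
proof -
  have emb: "size_pres_emb pm_one_embedding"
    unfolding size_pres_emb_def
    by (rule exI[of _ 3], rule exI[of _ 0]) (simp add: pm_one_embedding_def vsize_def)
  have act: "size_pres_act 1 1 (first_head l)" for l
    unfolding size_pres_act_def
    by (rule exI[of _ 1], rule exI[of _ 0]) (auto simp: first_head_def length_Suc_conv)
  have decides: "(\<Sum>c<1. [1::rat] ! c *
      fval (hd (tf_states 1 1 pm_one_embedding constant_score first_head 1 w) ! c)) + 0 > 0
      \<longleftrightarrow> w \<in> MAJ" if "w \<noteq> []" for w
    using that fval_finv_pos[of "length w"] averaging_layer_output[OF that]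
    by (simp add: MAJ_def zero_less_mult_iff)
  show ?thesis
    unfolding T_sat_float_def
    using emb act decides
    by (intro CollectI conjI exI[of _ "0::rat"] exI[of _ "1::nat"] exI[of _ "[1::rat]"]
        exI[of _ pm_one_embedding] exI[of _ constant_score] exI[of _ first_head])
      (auto simp: MAJ_def pm_one_embedding_def first_head_def length_Suc_conv)
qed

definition gate_scan :: "('b list \<Rightarrow> 'a \<Rightarrow> 'b) \<Rightarrow> 'a list \<Rightarrow> 'b list" where
  "gate_scan F C = foldl (\<lambda>vs g. vs @ [F vs g]) [] C"

lemma gate_scan_snoc: "gate_scan F (C @ [g]) = gate_scan F C @ [F (gate_scan F C) g]"
  by (simp add: gate_scan_def)

lemma length_gate_scan [simp]: "length (gate_scan F C) = length C"
  by (induction C rule: rev_induct) (simp_all add: gate_scan_snoc, simp add: gate_scan_def)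

lemma take_gate_scan: "take k (gate_scan F C) = gate_scan F (take k C)"
proof (induction C rule: rev_induct)
  case (snoc g C)
  then show ?case
    by (cases "k \<le> length C") (simp_all add: gate_scan_snoc)
qed (simp add: gate_scan_def)

lemma nth_gate_scan:
  assumes "g < length C"
  shows "gate_scan F C ! g = F (take g (gate_scan F C)) (C ! g)"
proof -
  have "take (Suc g) (gate_scan F C)
      = take g (gate_scan F C) @ [F (take g (gate_scan F C)) (C ! g)]"
    using assms by (simp add: take_gate_scan take_Suc_conv_app_nth gate_scan_snoc)
  then show ?thesis
    using assms by (simp add: take_Suc_conv_app_nth)
qed

lemma circ_out_eq_last_gate_scan: "circ_out C w = last (gate_scan (gate_val w) C)"
  by (simp add: circ_out_def gate_scan_def)

lemma circ_depth_eq_gate_scan: "circ_depth C = foldr max (gate_scan gate_depth C) 0"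
  by (simp add: circ_depth_def gate_scan_def)

lemma member_le_foldr_max: "x \<in> set xs \<Longrightarrow> x \<le> foldr max xs (0::nat)"
  by (induction xs) auto

lemma length_le_circ_size: "length C \<le> circ_size C"
proof -
  have "1 \<le> gate_size g" for g
    by (cases g) simp_all
  then have "(\<Sum>g\<leftarrow>C. 1) \<le> circ_size C"
    unfolding circ_size_def by (rule sum_list_mono)
  then show ?thesis
    by (simp add: sum_list_triv)
qed

section \<open>Polynomials over F_3 in the variables (-1)^(x_i)\<close>

lemma F3_cases: "(x::3) = 0 \<or> x = 1 \<or> x = -1"
proof (cases x)
  case (of_int z)
  then have "z = 0 \<or> z = 1 \<or> z = 2"
    by (simp, arith)
  then show ?thesis
    using of_int by auto
qed

lemma F3_square_nonzero: "(x::3) \<noteq> 0 \<Longrightarrow> x\<^sup>2 = 1"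
  using F3_cases[of x] by auto

definition pm_one :: "bool \<Rightarrow> 3" where
  "pm_one b = (if b then -1 else 1)"

lemma pm_one_square [simp]: "pm_one b * pm_one b = 1"
  by (simp add: pm_one_def)

definition chi :: "nat set \<Rightarrow> bool list \<Rightarrow> 3" where
  "chi S w = (\<Prod>i\<in>S. pm_one (w ! i))"

definition small_subsets :: "nat \<Rightarrow> nat \<Rightarrow> nat set set" where
  "small_subsets N d = {S. S \<subseteq> {..<N} \<and> card S \<le> d}"

text \<open>On words of length N, f is a polynomial over F_3 of degree at most d in the variables
  y_i = pm_one (w ! i); as y_i^2 = 1, such polynomials are combinations of the monomials chi S.\<close>
definition poly_deg_le :: "nat \<Rightarrow> nat \<Rightarrow> (bool list \<Rightarrow> 3) \<Rightarrow> bool" where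
  "poly_deg_le N d f \<longleftrightarrow>
     (\<exists>c. \<forall>w. length w = N \<longrightarrow> f w = (\<Sum>S\<in>small_subsets N d. c S * chi S w))"

lemma finite_small_subsets [simp]: "finite (small_subsets N d)"
  by (rule finite_subset[of _ "Pow {..<N}"]) (auto simp: small_subsets_def)

lemma finite_of_small_subsets: "S \<in> small_subsets N d \<Longrightarrow> finite S"
  by (auto simp: small_subsets_def intro: finite_subset)

lemma poly_deg_le_cong:
  "poly_deg_le N d f \<Longrightarrow> (\<And>w. length w = N \<Longrightarrow> f w = g w) \<Longrightarrow> poly_deg_le N d g"
  unfolding poly_deg_le_def by metis

lemma poly_deg_le_add:
  assumes "poly_deg_le N d f" "poly_deg_le N d g"
  shows "poly_deg_le N d (\<lambda>w. f w + g w)"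
proof -
  obtain c c' where
    "\<forall>w. length w = N \<longrightarrow> f w = (\<Sum>S\<in>small_subsets N d. c S * chi S w)"
    "\<forall>w. length w = N \<longrightarrow> g w = (\<Sum>S\<in>small_subsets N d. c' S * chi S w)"
    using assms unfolding poly_deg_le_def by blast
  then show ?thesis
    unfolding poly_deg_le_def
    by (intro exI[of _ "\<lambda>S. c S + c' S"]) (simp add: distrib_right sum.distrib)
qed

lemma poly_deg_le_smult:
  assumes "poly_deg_le N d f"
  shows "poly_deg_le N d (\<lambda>w. k * f w)"
proof -
  obtain c where "\<forall>w. length w = N \<longrightarrow> f w = (\<Sum>S\<in>small_subsets N d. c S * chi S w)"
    using assms unfolding poly_deg_le_def by blast
  then show ?thesis
    unfolding poly_deg_le_def
    by (intro exI[of _ "\<lambda>S. k * c S"]) (simp add: sum_distrib_left mult.assoc)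
qed

lemma poly_deg_le_sum:
  "finite I \<Longrightarrow> (\<And>i. i \<in> I \<Longrightarrow> poly_deg_le N d (F i)) \<Longrightarrow> poly_deg_le N d (\<lambda>w. \<Sum>i\<in>I. F i w)"
proof (induction I rule: finite_induct)
  case empty
  show ?case
    unfolding poly_deg_le_def by (intro exI[of _ "\<lambda>S. 0"]) simp
next
  case (insert i I)
  then show ?case
    by (simp add: poly_deg_le_add)
qed

lemma poly_deg_le_chi:
  assumes "S \<subseteq> {..<N}" "card S \<le> d"
  shows "poly_deg_le N d (chi S)"
proof -
  have "S \<in> small_subsets N d"
    using assms by (simp add: small_subsets_def)
  then have "(\<Sum>T\<in>small_subsets N d. of_bool (T = S) * chi T w) = chi S w" for w
    by (simp add: Int_absorb1)
  then show ?thesis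
    unfolding poly_deg_le_def by metis
qed

lemma poly_deg_le_const: "poly_deg_le N d (\<lambda>w. k)"
  using poly_deg_le_smult[OF poly_deg_le_chi[of "{}" N d], of k] by (simp add: chi_def)

lemma poly_deg_le_diff:
  assumes "poly_deg_le N d f" "poly_deg_le N d g"
  shows "poly_deg_le N d (\<lambda>w. f w - g w)"
  using poly_deg_le_add[OF assms(1) poly_deg_le_smult[OF assms(2), of "-1"]] by simp

lemma poly_deg_le_mono:
  assumes f: "poly_deg_le N d f" and "d \<le> d'"
  shows "poly_deg_le N d' f"
proof -
  obtain c where c: "\<forall>w. length w = N \<longrightarrow> f w = (\<Sum>S\<in>small_subsets N d. c S * chi S w)"
    using f unfolding poly_deg_le_def by blast
  have "poly_deg_le N d' (\<lambda>w. \<Sum>S\<in>small_subsets N d. c S * chi S w)"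
    using \<open>d \<le> d'\<close>
    by (intro poly_deg_le_sum poly_deg_le_smult poly_deg_le_chi) (auto simp: small_subsets_def)
  then show ?thesis
    by (rule poly_deg_le_cong) (simp add: c)
qed

lemma chi_mult:
  assumes "finite S" "finite T"
  shows "chi S w * chi T w = chi ((S - T) \<union> (T - S)) w"
proof -
  have split: "chi A w = chi (A - B) w * chi (A \<inter> B) w" if "finite A" for A B
  proof -
    have "chi A w = chi ((A - B) \<union> (A \<inter> B)) w"
      by (simp add: Un_Diff_Int)
    also have "\<dots> = chi (A - B) w * chi (A \<inter> B) w"
      unfolding chi_def using that by (intro prod.union_disjoint) auto
    finally show ?thesis .
  qed
  have "chi (S \<inter> T) w * chi (S \<inter> T) w = 1"
    unfolding chi_def prod.distrib[symmetric] by simp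
  moreover have "chi ((S - T) \<union> (T - S)) w = chi (S - T) w * chi (T - S) w"
    unfolding chi_def using assms by (intro prod.union_disjoint) auto
  ultimately show ?thesis
    using split[OF assms(1), of T] split[OF assms(2), of S]
    by (simp add: Int_commute mult.assoc mult.left_commute)
qed

lemma poly_deg_le_mult:
  assumes "poly_deg_le N a f" "poly_deg_le N b g"
  shows "poly_deg_le N (a + b) (\<lambda>w. f w * g w)"
proof -
  obtain c c' where
    c: "\<forall>w. length w = N \<longrightarrow> f w = (\<Sum>S\<in>small_subsets N a. c S * chi S w)" and
    c': "\<forall>w. length w = N \<longrightarrow> g w = (\<Sum>T\<in>small_subsets N b. c' T * chi T w)"
    using assms unfolding poly_deg_le_def by blast
  have "poly_deg_le N (a + b)
      (\<lambda>w. \<Sum>S\<in>small_subsets N a. \<Sum>T\<in>small_subsets N b. c S * c' T * chi ((S - T) \<union> (T - S)) w)"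
  proof (intro poly_deg_le_sum poly_deg_le_smult poly_deg_le_chi)
    fix S T assume S: "S \<in> small_subsets N a" and T: "T \<in> small_subsets N b"
    then show "(S - T) \<union> (T - S) \<subseteq> {..<N}"
      by (auto simp: small_subsets_def)
    have "card ((S - T) \<union> (T - S)) \<le> card (S - T) + card (T - S)"
      by (rule card_Un_le)
    also have "\<dots> \<le> card S + card T"
      using finite_of_small_subsets[OF S] finite_of_small_subsets[OF T]
      by (intro add_mono card_mono) auto
    finally have "card ((S - T) \<union> (T - S)) \<le> card S + card T" .
    then show "card ((S - T) \<union> (T - S)) \<le> a + b"
      using S T by (auto simp: small_subsets_def)
  qed simp_all
  then show ?thesis
  proof (rule poly_deg_le_cong)
    fix w :: "bool list" assume "length w = N"
    then have "f w * g w
        = (\<Sum>S\<in>small_subsets N a. \<Sum>T\<in>small_subsets N b. (c S * chi S w) * (c' T * chi T w))"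
      using c c' by (simp add: sum_product)
    also have "\<dots> = (\<Sum>S\<in>small_subsets N a. \<Sum>T\<in>small_subsets N b.
                        c S * c' T * chi ((S - T) \<union> (T - S)) w)"
      by (intro sum.cong refl) (simp add: chi_mult[symmetric] finite_of_small_subsets mult_ac)
    finally show "(\<Sum>S\<in>small_subsets N a. \<Sum>T\<in>small_subsets N b.
        c S * c' T * chi ((S - T) \<union> (T - S)) w) = f w * g w"
      by simp
  qed
qed

lemma poly_deg_le_prod:
  "(\<And>i. i < k \<Longrightarrow> poly_deg_le N a (F i)) \<Longrightarrow> poly_deg_le N (k * a) (\<lambda>w. \<Prod>i<k. F i w)"
proof (induction k)
  case 0
  then show ?case
    by (simp add: poly_deg_le_const)
next
  case (Suc k)
  then have "poly_deg_le N (a + k * a) (\<lambda>w. F k w * (\<Prod>i<k. F i w))"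
    by (intro poly_deg_le_mult) auto
  then show ?case
    by (simp add: mult.commute)
qed

lemma poly_deg_le_literal:
  assumes "i < N" "1 \<le> d"
  shows "poly_deg_le N d (\<lambda>w. of_bool (w ! i = b))"
proof -
  have literal: "of_bool (w ! i = b) = (if b then chi {i} w - 1 else -1 - chi {i} w)" for w
    by (simp add: chi_def pm_one_def)
  have "poly_deg_le N d (chi {i})"
    using assms by (intro poly_deg_le_chi) auto
  then show ?thesis
    unfolding literal by (cases b) (simp_all add: poly_deg_le_diff poly_deg_le_const)
qed

section \<open>Razborov's approximation of circuits\<close>

lemma card_zero_sum_subsets_le:
  fixes v :: "'a \<Rightarrow> 'b::comm_monoid_add"
  assumes J: "finite J" and k: "k \<in> J" "v k \<noteq> 0"
  shows "2 * card {T \<in> Pow J. sum v T = 0} \<le> 2 ^ card J"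
proof -
  define Z where "Z = {T \<in> Pow J. sum v T = 0}"
  define flip where "flip T = (if k \<in> T then T - {k} else insert k T)" for T
  have flip_flip: "flip (flip T) = T" for T
    by (auto simp: flip_def)
  have "T \<notin> Z \<or> flip T \<notin> Z" for T
  proof (rule ccontr)
    assume "\<not> ?thesis"
    then have "T \<in> Z" "flip T \<in> Z"
      by auto
    moreover have "finite T"
      using \<open>T \<in> Z\<close> J by (auto simp: Z_def intro: finite_subset)
    ultimately have "sum v (insert k (T - {k})) = 0" "sum v (T - {k}) = 0"
      by (cases "k \<in> T"; simp add: Z_def flip_def insert_absorb)+
    then show False
      using \<open>finite T\<close> k(2) by (simp add: sum.insert_remove)
  qed
  then have disjoint: "Z \<inter> flip ` Z = {}"
    using flip_flip by auto
  have "inj_on flip Z"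
    by (metis flip_flip inj_onI)
  then have "2 * card Z = card (Z \<union> flip ` Z)"
    using disjoint J by (simp add: card_Un_disjoint card_image Z_def)
  also have "\<dots> \<le> card (Pow J)"
    using J k(1) by (intro card_mono) (auto simp: Z_def flip_def)
  finally show ?thesis
    using J by (simp add: Z_def card_Pow)
qed

lemma exists_rarely_bad_choice:
  assumes X: "finite X" and TT: "finite TT" "TT \<noteq> {}"
    and rarely: "\<forall>x\<in>X. k * card {T\<in>TT. bad T x} \<le> card TT"
  shows "\<exists>T\<in>TT. k * card {x\<in>X. bad T x} \<le> card X"
proof (rule ccontr)
  assume "\<not> ?thesis"
  then have "(\<Sum>T\<in>TT. card X) < (\<Sum>T\<in>TT. k * card {x\<in>X. bad T x})"
    using TT by (intro sum_strict_mono) auto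
  also have "\<dots> = k * (\<Sum>T\<in>TT. \<Sum>x\<in>X. of_bool (bad T x))"
    using X by (simp add: sum_distrib_left Int_def)
  also have "\<dots> = k * (\<Sum>x\<in>X. \<Sum>T\<in>TT. of_bool (bad T x))"
    by (simp only: sum.swap[of _ TT])
  also have "\<dots> = (\<Sum>x\<in>X. k * card {T\<in>TT. bad T x})"
    using TT by (simp add: sum_distrib_left Int_def)
  also have "\<dots> \<le> (\<Sum>x\<in>X. card TT)"
    using rarely by (intro sum_mono) auto
  finally show False
    by (simp add: mult.commute)
qed

text \<open>As a nonzero square in F_3 is 1, this is the OR of 0/1-valued inputs p_j unless some input
  is 1 yet every partial sum over a T_i vanishes; for random subsets T_i of the inputs that
  happens with probability at most 2^-l.\<close>
definition razborov_or ::
    "nat \<Rightarrow> (nat \<Rightarrow> nat set) \<Rightarrow> (nat \<Rightarrow> bool list \<Rightarrow> 3) \<Rightarrow> bool list \<Rightarrow> 3" where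
  "razborov_or l T p x = 1 - (\<Prod>i<l. 1 - (\<Sum>j\<in>T i. p j x)\<^sup>2)"

lemma poly_deg_le_razborov_or:
  assumes J: "finite J" and T: "\<forall>i<l. T i \<subseteq> J" and deg: "\<forall>j\<in>J. poly_deg_le N a (p j)"
  shows "poly_deg_le N (l * (2 * a)) (razborov_or l T p)"
proof -
  have "poly_deg_le N (2 * a) (\<lambda>x. 1 - (\<Sum>j\<in>T i. p j x)\<^sup>2)" if "i < l" for i
  proof -
    have sub: "T i \<subseteq> J"
      using T that by simp
    have sum_deg: "poly_deg_le N a (\<lambda>x. \<Sum>j\<in>T i. p j x)"
      using finite_subset[OF sub J] sub deg by (intro poly_deg_le_sum) auto
    have "poly_deg_le N (a + a) (\<lambda>x. (\<Sum>j\<in>T i. p j x)\<^sup>2)"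
      using poly_deg_le_mult[OF sum_deg sum_deg] by (simp add: power2_eq_square)
    then show ?thesis
      by (simp add: poly_deg_le_diff poly_deg_le_const mult_2)
  qed
  then have "poly_deg_le N (l * (2 * a)) (\<lambda>x. \<Prod>i<l. 1 - (\<Sum>j\<in>T i. p j x)\<^sup>2)"
    by (rule poly_deg_le_prod)
  then show ?thesis
    unfolding razborov_or_def[abs_def] by (rule poly_deg_le_diff[OF poly_deg_le_const])
qed

lemma razborov_or_error:
  assumes "\<forall>j\<in>J. p j x \<in> {0, 1}" and "\<forall>i<l. T i \<subseteq> J"
    and "razborov_or l T p x \<noteq> of_bool (\<exists>j\<in>J. p j x = 1)"
  shows "(\<exists>j\<in>J. p j x = 1) \<and> (\<forall>i<l. (\<Sum>j\<in>T i. p j x) = 0)"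
proof (cases "\<exists>j\<in>J. p j x = 1")
  case False
  then have "\<forall>i<l. (\<Sum>j\<in>T i. p j x) = 0"
    using assms(1,2) by (metis (no_types, lifting) insertE singletonD subsetD sum.neutral)
  then show ?thesis
    using assms(3) False by (simp add: razborov_or_def)
next
  case True
  have "(\<Sum>j\<in>T i. p j x) = 0" if "i < l" for i
  proof (rule ccontr)
    assume "(\<Sum>j\<in>T i. p j x) \<noteq> 0"
    then have "(\<Prod>i<l. 1 - (\<Sum>j\<in>T i. p j x)\<^sup>2) = 0"
      using that F3_square_nonzero by (intro prod_zero) auto
    then show False
      using assms(3) True by (simp add: razborov_or_def)
  qed
  then show ?thesis
    using True by simp
qed

lemma razborov_or_rarely_wrong:
  fixes p :: "nat \<Rightarrow> bool list \<Rightarrow> 3"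
  assumes J: "finite J"
  shows "2 ^ l * card {T \<in> Pi\<^sub>E {..<l} (\<lambda>_. Pow J). (\<forall>j\<in>J. p j x \<in> {0, 1}) \<and>
      razborov_or l T p x \<noteq> of_bool (\<exists>j\<in>J. p j x = 1)} \<le> (2 ^ card J) ^ l"
    (is "2 ^ l * card ?wrong \<le> _")
proof -
  have wrong: "(\<exists>j\<in>J. p j x = 1) \<and> (\<forall>i<l. (\<Sum>j\<in>T i. p j x) = 0)" if "T \<in> ?wrong" for T
  proof -
    have "\<forall>i<l. T i \<subseteq> J"
      using that by (auto simp: PiE_iff)
    with that show ?thesis
      using razborov_or_error[of J p x l T] by blast
  qed
  show ?thesis
  proof (cases "\<exists>j\<in>J. p j x = 1")
    case False
    then have "?wrong = {}"
      using wrong by blast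
    then have "card ?wrong = 0"
      by (simp only: card.empty)
    then show ?thesis
      by simp
  next
    case True
    then obtain k where k: "k \<in> J" "p k x = 1"
      by blast
    define Z where "Z = {S \<in> Pow J. (\<Sum>j\<in>S. p j x) = 0}"
    have "?wrong \<subseteq> Pi\<^sub>E {..<l} (\<lambda>_. Z)"
    proof
      fix T assume T: "T \<in> ?wrong"
      then have "T \<in> Pi\<^sub>E {..<l} (\<lambda>_. Pow J)"
        by blast
      then show "T \<in> Pi\<^sub>E {..<l} (\<lambda>_. Z)"
        using wrong[OF T] by (auto simp: Z_def PiE_iff)
    qed
    then have "card ?wrong \<le> card (Pi\<^sub>E {..<l} (\<lambda>_. Z))"
      using J by (intro card_mono finite_PiE) (auto simp: Z_def)
    then have "2 ^ l * card ?wrong \<le> (2 * card Z) ^ l"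
      by (simp add: card_PiE power_mult_distrib)
    also have "\<dots> \<le> (2 ^ card J) ^ l"
      unfolding Z_def using card_zero_sum_subsets_le[OF J k(1), of "\<lambda>j. p j x"] k(2)
      by (intro power_mono) auto
    finally show ?thesis .
  qed
qed

lemma razborov_or_approx:
  fixes p :: "nat \<Rightarrow> bool list \<Rightarrow> 3"
  assumes X: "finite X" and J: "finite J" and deg: "\<forall>j\<in>J. poly_deg_le N a (p j)"
  shows "\<exists>q. poly_deg_le N (l * (2 * a)) q \<and>
    2 ^ l * card {x\<in>X. (\<forall>j\<in>J. p j x \<in> {0, 1}) \<and> q x \<noteq> of_bool (\<exists>j\<in>J. p j x = 1)} \<le> card X"
proof -
  define TT where "TT = Pi\<^sub>E {..<l} (\<lambda>_. Pow J)"
  define wrong where "wrong T x \<longleftrightarrow>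
    (\<forall>j\<in>J. p j x \<in> {0, 1}) \<and> razborov_or l T p x \<noteq> of_bool (\<exists>j\<in>J. p j x = 1)" for T x
  have "finite TT" "TT \<noteq> {}"
    using J by (auto simp: TT_def PiE_eq_empty_iff intro!: finite_PiE)
  moreover have "\<forall>x\<in>X. 2 ^ l * card {T\<in>TT. wrong T x} \<le> card TT"
    using razborov_or_rarely_wrong[OF J, of l p] J by (simp add: TT_def wrong_def card_PiE card_Pow)
  ultimately obtain T where T: "T \<in> TT" "2 ^ l * card {x\<in>X. wrong T x} \<le> card X"
    using exists_rarely_bad_choice[OF X] by blast
  have "\<forall>i<l. T i \<subseteq> J"
    using T(1) by (auto simp: TT_def PiE_iff)
  with J deg have "poly_deg_le N (l * (2 * a)) (razborov_or l T p)"
    by (intro poly_deg_le_razborov_or)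
  with T(2) show ?thesis
    unfolding wrong_def by blast
qed

lemma or_gate_approx:
  fixes P :: "nat \<Rightarrow> bool list \<Rightarrow> 3"
  assumes X: "finite X" and J: "finite J" and deg: "\<forall>j\<in>J. poly_deg_le N a (P j)"
    and P: "\<forall>x\<in>X - B. \<forall>j\<in>J. P j x = of_bool (v j x)"
  shows "\<exists>q E. poly_deg_le N (l * (2 * a)) q \<and> E \<subseteq> X \<and> 2 ^ l * card E \<le> card X \<and>
    (\<forall>x\<in>X - B - E. q x = of_bool (\<exists>j\<in>J. v j x))"
proof -
  obtain q where q: "poly_deg_le N (l * (2 * a)) q"
    and few: "2 ^ l * card {x\<in>X. (\<forall>j\<in>J. P j x \<in> {0, 1}) \<and> q x \<noteq> of_bool (\<exists>j\<in>J. P j x = 1)} \<le> card X"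
    using razborov_or_approx[OF X J deg] by blast
  define E where "E = {x\<in>X. (\<forall>j\<in>J. P j x \<in> {0, 1}) \<and> q x \<noteq> of_bool (\<exists>j\<in>J. P j x = 1)}"
  have "q x = of_bool (\<exists>j\<in>J. v j x)" if x: "x \<in> X - B - E" for x
  proof -
    have Pv: "\<forall>j\<in>J. P j x = of_bool (v j x)"
      using P x by blast
    then have "\<forall>j\<in>J. P j x \<in> {0, 1}"
      by simp
    with x have "q x = of_bool (\<exists>j\<in>J. P j x = 1)"
      unfolding E_def by blast
    with Pv show ?thesis
      by simp
  qed
  moreover have "E \<subseteq> X"
    by (auto simp: E_def)
  ultimately show ?thesis
    using q few unfolding E_def by blast
qed

lemma and_gate_approx:
  fixes P :: "nat \<Rightarrow> bool list \<Rightarrow> 3"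
  assumes X: "finite X" and J: "finite J" and deg: "\<forall>j\<in>J. poly_deg_le N a (P j)"
    and P: "\<forall>x\<in>X - B. \<forall>j\<in>J. P j x = of_bool (v j x)"
  shows "\<exists>q E. poly_deg_le N (l * (2 * a)) q \<and> E \<subseteq> X \<and> 2 ^ l * card E \<le> card X \<and>
    (\<forall>x\<in>X - B - E. q x = of_bool (\<forall>j\<in>J. v j x))"
proof -
  have "\<forall>j\<in>J. poly_deg_le N a (\<lambda>x. 1 - P j x)"
    using deg poly_deg_le_diff[OF poly_deg_le_const] by blast
  moreover have "\<forall>x\<in>X - B. \<forall>j\<in>J. 1 - P j x = of_bool (\<not> v j x)"
    using P by simp
  ultimately obtain q E where q: "poly_deg_le N (l * (2 * a)) q"
    and E: "E \<subseteq> X" "2 ^ l * card E \<le> card X" and val: "\<forall>x\<in>X - B - E. q x = of_bool (\<exists>j\<in>J. \<not> v j x)"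
    using or_gate_approx[OF X J, of N a "\<lambda>j x. 1 - P j x" B "\<lambda>j x. \<not> v j x" l] by blast
  have "poly_deg_le N (l * (2 * a)) (\<lambda>x. 1 - q x)"
    using q by (rule poly_deg_le_diff[OF poly_deg_le_const])
  moreover have "\<forall>x\<in>X - B - E. 1 - q x = of_bool (\<forall>j\<in>J. v j x)"
    using val by simp
  ultimately show ?thesis
    using E by blast
qed

lemma poly_deg_le_gate_inputs:
  assumes l: "1 \<le> l" and js: "\<forall>j\<in>set js. j < m"
    and deg: "\<forall>g<m. poly_deg_le N ((2 * l) ^ (gate_scan gate_depth C ! g)) (P g)"
  shows "\<forall>j\<in>set js.
    poly_deg_le N ((2 * l) ^ foldr max (map ((!) (take m (gate_scan gate_depth C))) js) 0) (P j)"
proof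
  fix j assume j: "j \<in> set js"
  let ?ds = "take m (gate_scan gate_depth C)"
  have "(2 * l) ^ (gate_scan gate_depth C ! j) \<le> (2 * l) ^ foldr max (map ((!) ?ds) js) 0"
    using l js j member_le_foldr_max[of "?ds ! j" "map ((!) ?ds) js"]
    by (intro power_increasing) auto
  then show "poly_deg_le N ((2 * l) ^ foldr max (map ((!) ?ds) js) 0) (P j)"
    using deg js j poly_deg_le_mono by blast
qed

lemma next_gate_approx:
  fixes P :: "nat \<Rightarrow> bool list \<Rightarrow> 3"
  assumes wf: "circ_wf N C" and X: "finite X" and l: "1 \<le> l" and m: "m < length C"
    and deg: "\<forall>g<m. poly_deg_le N ((2 * l) ^ (gate_scan gate_depth C ! g)) (P g)"
    and val: "\<forall>x\<in>X - B. \<forall>g<m. P g x = of_bool (gate_scan (gate_val x) C ! g)"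
  shows "\<exists>q E. poly_deg_le N ((2 * l) ^ (gate_scan gate_depth C ! m)) q \<and>
    E \<subseteq> X \<and> 2 ^ l * card E \<le> card X \<and>
    (\<forall>x\<in>X - B - E. q x = of_bool (gate_scan (gate_val x) C ! m))"
proof -
  define ds where "ds = gate_scan gate_depth C"
  define t where "t js = foldr max (map ((!) (take m ds)) js) 0" for js
  have inputs: "\<forall>j\<in>set js. poly_deg_le N ((2 * l) ^ t js) (P j)"
    and input_vals: "\<forall>x\<in>X - B. \<forall>j\<in>set js. P j x = of_bool (gate_scan (gate_val x) C ! j)"
    if "\<forall>j\<in>set js. j < m" for js
    using poly_deg_le_gate_inputs[OF l that deg] val that by (auto simp: t_def ds_def)
  have depth: "ds ! m = gate_depth (take m ds) (C ! m)"
    unfolding ds_def by (rule nth_gate_scan[OF m])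
  have gate_output:
    "gate_scan (gate_val x) C ! m = gate_val x (take m (gate_scan (gate_val x) C)) (C ! m)" for x
    by (rule nth_gate_scan[OF m])
  have wf_m: "case C ! m of Lit i b \<Rightarrow> i < N
    | AndG js \<Rightarrow> \<forall>j\<in>set js. j < m | OrG js \<Rightarrow> \<forall>j\<in>set js. j < m"
    using wf m by (simp add: circ_wf_def)
  show ?thesis
  proof (cases "C ! m")
    case (Lit i b)
    then have "poly_deg_le N ((2 * l) ^ (ds ! m)) (\<lambda>x. of_bool (x ! i = b))"
      using wf_m depth by (simp add: poly_deg_le_literal)
    then show ?thesis
      using Lit gate_output unfolding ds_def
      by (intro exI[of _ "\<lambda>x. of_bool (x ! i = b)"] exI[of _ "{}"]) simp
  next
    case (AndG js)
    with wf_m have js: "\<forall>j\<in>set js. j < m"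
      by simp
    obtain q E where "poly_deg_le N (l * (2 * (2 * l) ^ t js)) q" "E \<subseteq> X" "2 ^ l * card E \<le> card X"
      "\<forall>x\<in>X - B - E. q x = of_bool (\<forall>j\<in>set js. gate_scan (gate_val x) C ! j)"
      using and_gate_approx[OF X finite_set inputs[OF js] input_vals[OF js]] by blast
    then show ?thesis
      using AndG depth gate_output js unfolding ds_def t_def
      by (intro exI[of _ q] exI[of _ E]) (auto simp: mult_ac)
  next
    case (OrG js)
    with wf_m have js: "\<forall>j\<in>set js. j < m"
      by simp
    obtain q E where "poly_deg_le N (l * (2 * (2 * l) ^ t js)) q" "E \<subseteq> X" "2 ^ l * card E \<le> card X"
      "\<forall>x\<in>X - B - E. q x = of_bool (\<exists>j\<in>set js. gate_scan (gate_val x) C ! j)"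
      using or_gate_approx[OF X finite_set inputs[OF js] input_vals[OF js]] by blast
    then show ?thesis
      using OrG depth gate_output js unfolding ds_def t_def
      by (intro exI[of _ q] exI[of _ E]) (auto simp: mult_ac)
  qed
qed

lemma circuit_prefix_approx:
  assumes wf: "circ_wf N C" and X: "finite X" and l: "1 \<le> l" and "m \<le> length C"
  shows "\<exists>P B. (\<forall>g<m. poly_deg_le N ((2 * l) ^ (gate_scan gate_depth C ! g)) (P g)) \<and>
    B \<subseteq> X \<and> 2 ^ l * card B \<le> m * card X \<and>
    (\<forall>x\<in>X - B. \<forall>g<m. P g x = of_bool (gate_scan (gate_val x) C ! g))"
  using \<open>m \<le> length C\<close>
proof (induction m)
  case 0
  show ?case
    by (intro exI[of _ "\<lambda>g x. 0"] exI[of _ "{}"]) simp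
next
  case (Suc m)
  then obtain P B where deg: "\<forall>g<m. poly_deg_le N ((2 * l) ^ (gate_scan gate_depth C ! g)) (P g)"
    and B: "B \<subseteq> X" "2 ^ l * card B \<le> m * card X"
    and val: "\<forall>x\<in>X - B. \<forall>g<m. P g x = of_bool (gate_scan (gate_val x) C ! g)"
    by auto
  obtain q E where q: "poly_deg_le N ((2 * l) ^ (gate_scan gate_depth C ! m)) q"
    and E: "E \<subseteq> X" "2 ^ l * card E \<le> card X"
    and q_val: "\<forall>x\<in>X - B - E. q x = of_bool (gate_scan (gate_val x) C ! m)"
    using next_gate_approx[OF wf X l _ deg val] Suc.prems by auto
  have "2 ^ l * card (B \<union> E) \<le> 2 ^ l * (card B + card E)"
    using card_Un_le by (rule mult_le_mono2)
  also have "\<dots> \<le> Suc m * card X"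
    using B E by (simp add: add_mult_distrib2)
  finally have "2 ^ l * card (B \<union> E) \<le> Suc m * card X" .
  moreover have "\<forall>g<Suc m. poly_deg_le N ((2 * l) ^ (gate_scan gate_depth C ! g)) ((P(m := q)) g)"
    using deg q by (simp add: less_Suc_eq)
  moreover have "\<forall>x\<in>X - (B \<union> E). \<forall>g<Suc m. (P(m := q)) g x = of_bool (gate_scan (gate_val x) C ! g)"
    using val q_val by (auto simp: less_Suc_eq)
  ultimately show ?case
    using B E by (intro exI[of _ "P(m := q)"] exI[of _ "B \<union> E"]) auto
qed

theorem razborov_circuit_approx:
  assumes wf: "circ_wf N C" and X: "finite X" and l: "1 \<le> l" and depth: "circ_depth C \<le> d"
  shows "\<exists>P B. poly_deg_le N ((2 * l) ^ d) P \<and> B \<subseteq> X \<and> 2 ^ l * card B \<le> length C * card X \<and>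
    (\<forall>x\<in>X - B. P x = of_bool (circ_out C x))"
proof -
  obtain P B where deg: "\<forall>g<length C. poly_deg_le N ((2 * l) ^ (gate_scan gate_depth C ! g)) (P g)"
    and B: "B \<subseteq> X" "2 ^ l * card B \<le> length C * card X"
    and val: "\<forall>x\<in>X - B. \<forall>g<length C. P g x = of_bool (gate_scan (gate_val x) C ! g)"
    using circuit_prefix_approx[OF wf X l order.refl] by blast
  define out where "out = length C - 1"
  have out: "out < length C"
    using wf by (simp add: out_def circ_wf_def)
  have "gate_scan gate_depth C ! out \<le> circ_depth C"
    unfolding circ_depth_eq_gate_scan using out by (intro member_le_foldr_max) simp
  then have "gate_scan gate_depth C ! out \<le> d"
    using depth by simp
  then have "(2 * l) ^ (gate_scan gate_depth C ! out) \<le> (2 * l) ^ d"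
    using l by (intro power_increasing) auto
  then have "poly_deg_le N ((2 * l) ^ d) (P out)"
    using deg out poly_deg_le_mono by blast
  moreover have "circ_out C x = gate_scan (gate_val x) C ! out" for x
  proof -
    have "gate_scan (gate_val x) C \<noteq> []"
      using out by (metis length_gate_scan list.size(3) not_less0)
    then show ?thesis
      by (simp add: circ_out_eq_last_gate_scan last_conv_nth out_def)
  qed
  ultimately show ?thesis
    using B val out by (intro exI[of _ "P out"] exI[of _ B]) auto
qed

section \<open>Smolensky's counting argument\<close>

definition cube :: "nat \<Rightarrow> bool list set" where
  "cube n = {w. length w = n}"

lemma finite_cube [simp]: "finite (cube n)"
  using finite_lists_length_eq[of "UNIV :: bool set" n] by (simp add: cube_def)

lemma card_cube: "card (cube n) = 2 ^ n"
  using card_lists_length_eq[of "UNIV :: bool set" n] by (simp add: cube_def)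

definition point_indicator :: "bool list \<Rightarrow> bool list \<Rightarrow> 3" where
  "point_indicator a w = (\<Prod>i<length a. - (1 + pm_one (a ! i) * pm_one (w ! i)))"

lemma point_indicator_eq:
  assumes "length w = length a"
  shows "point_indicator a w = of_bool (a = w)"
proof (cases "a = w")
  case True
  have "(\<Prod>i<length a. - (1 + pm_one (a ! i) * pm_one (a ! i))) = 1"
    by (intro prod.neutral) simp
  with True show ?thesis
    by (simp add: point_indicator_def)
next
  case False
  then obtain i where i: "i < length a" "a ! i \<noteq> w ! i"
    using assms by (auto simp: list_eq_iff_nth_eq)
  then have "- (1 + pm_one (a ! i) * pm_one (w ! i)) = 0"
    by (cases "a ! i") (auto simp: pm_one_def)
  then have "point_indicator a w = 0"
    unfolding point_indicator_def using i(1) by (intro prod_zero) blast+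
  with False show ?thesis
    by simp
qed

lemma poly_deg_le_point_indicator: "poly_deg_le (length a) (length a) (point_indicator a)"
proof -
  have "poly_deg_le (length a) (length a * 1) (\<lambda>w. \<Prod>i<length a. - (1 + pm_one (a ! i) * chi {i} w))"
  proof (rule poly_deg_le_prod)
    fix i assume "i < length a"
    then have "poly_deg_le (length a) 1 (chi {i})"
      by (intro poly_deg_le_chi) auto
    then show "poly_deg_le (length a) 1 (\<lambda>w. - (1 + pm_one (a ! i) * chi {i} w))"
      using poly_deg_le_smult poly_deg_le_add poly_deg_le_const
        poly_deg_le_diff[OF poly_deg_le_const] by simp
  qed
  then show ?thesis
    unfolding point_indicator_def[abs_def] by (simp add: chi_def)
qed

lemma poly_deg_le_full: "poly_deg_le n n f"
proof -
  have "poly_deg_le n n (\<lambda>w. \<Sum>a\<in>cube n. f a * point_indicator a w)"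
  proof (intro poly_deg_le_sum[OF finite_cube] poly_deg_le_smult)
    fix a assume "a \<in> cube n"
    then show "poly_deg_le n n (point_indicator a)"
      using poly_deg_le_point_indicator[of a] by (simp add: cube_def)
  qed
  then show ?thesis
  proof (rule poly_deg_le_cong)
    fix w :: "bool list" assume w: "length w = n"
    then have "(\<Sum>a\<in>cube n. f a * point_indicator a w) = (\<Sum>a\<in>cube n. if a = w then f a else 0)"
      by (intro sum.cong) (auto simp: point_indicator_eq cube_def)
    also have "\<dots> = f w"
      using w by (subst sum.delta[OF finite_cube]) (simp add: cube_def)
    finally show "(\<Sum>a\<in>cube n. f a * point_indicator a w) = f w" .
  qed
qed

lemma chi_eq_parity_mult_chi_complement:
  assumes "S \<subseteq> {..<n}"
  shows "chi S x = chi {..<n} x * chi ({..<n} - S) x"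
proof -
  have "({..<n} - ({..<n} - S)) \<union> (({..<n} - S) - {..<n}) = S"
    using assms by auto
  then show ?thesis
    using chi_mult[of "{..<n}" "{..<n} - S" x] by simp
qed

lemma chi_low_degree_on_parity_set:
  assumes H: "poly_deg_le n D H" and HG: "\<forall>x\<in>G. H x = chi {..<n} x" and S: "S \<subseteq> {..<n}"
  shows "\<exists>h. poly_deg_le n (n div 2 + D) h \<and> (\<forall>x\<in>G. chi S x = h x)"
proof (cases "card S \<le> n div 2")
  case True
  then have "poly_deg_le n (n div 2 + D) (chi S)"
    using S by (intro poly_deg_le_chi) auto
  then show ?thesis
    by blast
next
  case False
  have "card ({..<n} - S) = n - card S"
    using S by (simp add: card_Diff_subset finite_subset)
  then have "card ({..<n} - S) \<le> n div 2"
    using False by linarith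
  then have "poly_deg_le n (D + n div 2) (\<lambda>x. H x * chi ({..<n} - S) x)"
    using H by (intro poly_deg_le_mult poly_deg_le_chi) auto
  moreover have "\<forall>x\<in>G. chi S x = H x * chi ({..<n} - S) x"
    using HG chi_eq_parity_mult_chi_complement[OF S] by simp
  ultimately show ?thesis
    by (auto simp: add.commute)
qed

lemma low_degree_on_parity_set:
  assumes H: "poly_deg_le n D H" and G: "G \<subseteq> cube n" and HG: "\<forall>x\<in>G. H x = chi {..<n} x"
  shows "\<exists>h. poly_deg_le n (n div 2 + D) h \<and> (\<forall>x\<in>G. f x = h x)"
proof -
  obtain c where c: "\<forall>w. length w = n \<longrightarrow> f w = (\<Sum>S\<in>small_subsets n n. c S * chi S w)"
    using poly_deg_le_full[of n f] unfolding poly_deg_le_def by blast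
  have "\<forall>S\<in>small_subsets n n. \<exists>h. poly_deg_le n (n div 2 + D) h \<and> (\<forall>x\<in>G. chi S x = h x)"
    using chi_low_degree_on_parity_set[OF H HG] by (simp add: small_subsets_def)
  then obtain h where h: "\<forall>S\<in>small_subsets n n.
      poly_deg_le n (n div 2 + D) (h S) \<and> (\<forall>x\<in>G. chi S x = h S x)"
    by (metis bchoice)
  have "poly_deg_le n (n div 2 + D) (\<lambda>w. \<Sum>S\<in>small_subsets n n. c S * h S w)"
    using h by (intro poly_deg_le_sum poly_deg_le_smult) auto
  moreover have "f x = (\<Sum>S\<in>small_subsets n n. c S * h S x)" if "x \<in> G" for x
    using c h that G by (simp add: cube_def subset_iff)
  ultimately show ?thesis
    by blast
qed

lemma functions_on_parity_set_low_degree: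
  assumes H: "poly_deg_le n D H" and G: "G \<subseteq> cube n" and HG: "\<forall>x\<in>G. H x = chi {..<n} x"
  shows "Pi\<^sub>E G (\<lambda>_. UNIV) \<subseteq> (\<lambda>c. restrict (\<lambda>w. \<Sum>S\<in>small_subsets n (n div 2 + D). c S * chi S w) G)
      ` Pi\<^sub>E (small_subsets n (n div 2 + D)) (\<lambda>_. UNIV)"
proof
  fix f :: "bool list \<Rightarrow> 3" assume f: "f \<in> Pi\<^sub>E G (\<lambda>_. UNIV)"
  define K where "K = small_subsets n (n div 2 + D)"
  obtain h where h: "poly_deg_le n (n div 2 + D) h" "\<forall>x\<in>G. f x = h x"
    using low_degree_on_parity_set[OF H G HG] by blast
  then obtain c where c: "\<forall>w. length w = n \<longrightarrow> h w = (\<Sum>S\<in>K. c S * chi S w)"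
    unfolding poly_deg_le_def K_def by blast
  have "restrict (\<lambda>w. \<Sum>S\<in>K. restrict c K S * chi S w) G x = f x" for x
  proof (cases "x \<in> G")
    case True
    then have "length x = n"
      using G by (auto simp: cube_def)
    with True show ?thesis
      using c h(2) by simp
  next
    case False
    with f show ?thesis
      by (simp add: PiE_def extensional_def)
  qed
  then show "f \<in> (\<lambda>c. restrict (\<lambda>w. \<Sum>S\<in>small_subsets n (n div 2 + D). c S * chi S w) G)
      ` Pi\<^sub>E (small_subsets n (n div 2 + D)) (\<lambda>_. UNIV)"
    unfolding K_def by (intro image_eqI[of _ _ "restrict c K"]) (auto simp: K_def)
qed

theorem card_le_of_parity_agreement:
  assumes H: "poly_deg_le n D H" and G: "G \<subseteq> cube n" and HG: "\<forall>x\<in>G. H x = chi {..<n} x"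
  shows "card G \<le> card (small_subsets n (n div 2 + D))"
proof -
  define K where "K = small_subsets n (n div 2 + D)"
  have fin: "finite (Pi\<^sub>E K (\<lambda>_. UNIV :: 3 set))"
    by (simp add: K_def finite_PiE)
  have "card (Pi\<^sub>E G (\<lambda>_. UNIV :: 3 set))
      \<le> card ((\<lambda>c. restrict (\<lambda>w. \<Sum>S\<in>K. c S * chi S w) G) ` Pi\<^sub>E K (\<lambda>_. UNIV))"
    using functions_on_parity_set_low_degree[OF H G HG] fin unfolding K_def
    by (intro card_mono finite_imageI)
  also have "\<dots> \<le> card (Pi\<^sub>E K (\<lambda>_. UNIV :: 3 set))"
    using fin by (rule card_image_le)
  finally have "card (Pi\<^sub>E G (\<lambda>_. UNIV :: 3 set)) \<le> card (Pi\<^sub>E K (\<lambda>_. UNIV :: 3 set))" .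
  moreover have "finite G"
    using G finite_cube by (rule finite_subset)
  ultimately have "(3::nat) ^ card G \<le> 3 ^ card K"
    by (simp add: card_PiE K_def)
  then show ?thesis
    unfolding K_def by simp
qed

lemma card_small_subsets_le:
  "2 * card (small_subsets (2 * m) (m + D)) \<le> 4 ^ m + 2 * (D + 1) * (2 * m choose m)"
proof -
  define U where "U = {..<2 * m}"
  define A where "A = {S. S \<subseteq> U \<and> card S < m}"
  define B where "B = {S. S \<subseteq> U \<and> m \<le> card S \<and> card S \<le> m + D}"
  have fin: "finite U" "finite A" "finite B"
    by (auto simp: U_def A_def B_def intro: finite_subset[of _ "Pow U"])
  have "small_subsets (2 * m) (m + D) \<subseteq> A \<union> B"
    by (auto simp: small_subsets_def A_def B_def U_def)
  then have "card (small_subsets (2 * m) (m + D)) \<le> card A + card B"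
    using fin by (metis card_Un_le card_mono finite_UnI order_trans)
  moreover have "2 * card A \<le> 4 ^ m"
  proof -
    have inj: "inj_on ((-) U) A"
      by (auto simp: inj_on_def A_def)
    have "card (U - S) = 2 * m - card S" if "S \<subseteq> U" for S
      using that fin(1) by (simp add: card_Diff_subset finite_subset U_def)
    then have "A \<inter> (-) U ` A = {}"
      by (auto simp: A_def)
    then have "2 * card A = card (A \<union> (-) U ` A)"
      using fin inj by (simp add: card_Un_disjoint card_image)
    also have "\<dots> \<le> card (Pow U)"
      using fin by (intro card_mono) (auto simp: A_def)
    also have "\<dots> = 4 ^ m"
      using fin by (simp add: card_Pow U_def power_mult)
    finally show ?thesis .
  qed
  moreover have "card B \<le> (D + 1) * (2 * m choose m)"
  proof -
    have "B = (\<Union>k\<in>{m..m + D}. {S. S \<subseteq> U \<and> card S = k})"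
      by (auto simp: B_def)
    then have "card B \<le> (\<Sum>k\<in>{m..m + D}. card {S. S \<subseteq> U \<and> card S = k})"
      by (simp add: card_UN_le)
    also have "\<dots> = (\<Sum>k\<in>{m..m + D}. 2 * m choose k)"
      using fin by (simp add: n_subsets U_def)
    also have "\<dots> \<le> (\<Sum>k\<in>{m..m + D}. 2 * m choose m)"
      by (intro sum_mono binomial_maximum')
    finally show ?thesis
      by simp
  qed
  ultimately show ?thesis
    by linarith
qed

lemma Suc_times_central_binomial:
  "(m + 1) * ((2 * m + 2) choose (m + 1)) = 2 * (2 * m + 1) * ((2 * m) choose m)"
proof -
  define a where "a = (2 * m + 1) choose m"
  define b where "b = (2 * m) choose m"
  define c where "c = (2 * m + 2) choose (m + 1)"
  have c: "(2 * m + 2) * a = c * (m + 1)"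
    using Suc_times_binomial_eq[of "2 * m + 1" m] unfolding a_def c_def
    by (simp del: binomial_Suc_Suc)
  have b: "(2 * m + 1) * b = ((2 * m + 1) choose (m + 1)) * (m + 1)"
    using Suc_times_binomial_eq[of "2 * m" m] unfolding b_def by (simp del: binomial_Suc_Suc)
  have a: "(2 * m + 1) choose (m + 1) = a"
    using binomial_symmetric[of "m + 1" "2 * m + 1"] unfolding a_def by (simp del: binomial_Suc_Suc)
  have "(m + 1) * ((m + 1) * c) = (m + 1) * (c * (m + 1))"
    by simp
  also have "\<dots> = (m + 1) * ((2 * m + 2) * a)"
    by (simp only: c)
  also have "\<dots> = 2 * (m + 1) * (a * (m + 1))"
    by (simp add: algebra_simps)
  also have "\<dots> = 2 * (m + 1) * ((2 * m + 1) * b)"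
    using a b by simp
  also have "\<dots> = (m + 1) * (2 * (2 * m + 1) * b)"
    by (simp add: algebra_simps)
  finally have "(m + 1) * c = 2 * (2 * m + 1) * b"
    by (simp only: mult_left_cancel)
  then show ?thesis
    by (simp add: b_def c_def)
qed

lemma central_binomial_sq_le: "((2 * m) choose m)\<^sup>2 * (2 * m + 1) \<le> 16 ^ m"
proof (induction m)
  case (Suc m)
  define c where "c = (2 * m) choose m"
  define c' where "c' = (2 * m + 2) choose (m + 1)"
  have rec: "(m + 1) * c' = 2 * (2 * m + 1) * c"
    using Suc_times_central_binomial[of m] by (simp add: c_def c'_def)
  have "(m + 1)\<^sup>2 * (c'\<^sup>2 * (2 * m + 3)) = ((m + 1) * c')\<^sup>2 * (2 * m + 3)"
    by (simp only: power_mult_distrib mult.assoc)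
  also have "\<dots> = 4 * (2 * m + 1) * (2 * m + 3) * (c\<^sup>2 * (2 * m + 1))"
    unfolding rec by (simp add: power2_eq_square algebra_simps)
  also have "\<dots> \<le> 4 * (2 * m + 1) * (2 * m + 3) * 16 ^ m"
    using Suc.IH by (simp add: c_def)
  also have "\<dots> \<le> (m + 1)\<^sup>2 * 16 ^ Suc m"
    by (simp add: power2_eq_square algebra_simps)
  finally have "c'\<^sup>2 * (2 * m + 3) \<le> 16 ^ Suc m"
    by (simp only: mult_le_cancel1) simp
  moreover have "(2 * Suc m) choose (Suc m) = c'"
    unfolding c'_def by (simp del: binomial_Suc_Suc)
  moreover have "2 * Suc m + 1 = 2 * m + 3"
    by simp
  ultimately show ?case
    by (simp only:)
qed simp

lemma card_parity_agreement_lt: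
  assumes H: "poly_deg_le (2 * m) D H" and G: "G \<subseteq> cube (2 * m)"
    and HG: "\<forall>x\<in>G. H x = chi {..<2 * m} x" and D: "4 * (D + 1)\<^sup>2 \<le> m"
  shows "8 * card G < 7 * 4 ^ m"
proof -
  define C where "C = 2 * m choose m"
  have "2 * card G \<le> 4 ^ m + 2 * (D + 1) * C"
    using card_le_of_parity_agreement[OF H G HG] card_small_subsets_le[of m D] by (simp add: C_def)
  moreover have "8 * (D + 1) * C < 3 * 4 ^ m"
  proof (rule power_less_imp_less_base)
    have "(8 * (D + 1))\<^sup>2 = 16 * (4 * (D + 1)\<^sup>2)"
      unfolding power_mult_distrib by simp
    then have "(8 * (D + 1))\<^sup>2 \<le> 16 * m"
      using D by simp
    then have "(8 * (D + 1) * C)\<^sup>2 \<le> 16 * m * C\<^sup>2"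
      unfolding power_mult_distrib[of "8 * (D + 1)"] by (rule mult_le_mono1)
    also have "\<dots> < 9 * ((2 * m + 1) * C\<^sup>2)"
      by (simp add: C_def)
    also have "\<dots> \<le> 9 * 16 ^ m"
      using central_binomial_sq_le[of m] by (simp add: C_def mult.commute)
    also have "\<dots> = (3 * 4 ^ m)\<^sup>2"
      by (simp add: power2_eq_square flip: power_mult_distrib)
    finally show "(8 * (D + 1) * C)\<^sup>2 < (3 * 4 ^ m)\<^sup>2" .
  qed simp
  ultimately show ?thesis
    by linarith
qed

section \<open>MAJ is not in AC0\<close>

lemma square_le_pow2: "4 \<le> j \<Longrightarrow> j\<^sup>2 \<le> (2::nat) ^ j"
proof (induction j rule: dec_induct)
  case (step j)
  have "2 * j + 1 \<le> j * j"
    using mult_le_mono1[of 4 j j] step(1) by linarith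
  then have "(Suc j)\<^sup>2 \<le> j\<^sup>2 + j\<^sup>2"
    by (simp add: power2_eq_square)
  also have "\<dots> \<le> 2 ^ Suc j"
    using step(3) by simp
  finally show ?case .
qed simp

lemma linear_le_pow2: "\<exists>j. a * (j + 1) \<le> (2::nat) ^ j"
proof -
  have "a * ((2 * a + 4) + 1) \<le> (2 * a + 4)\<^sup>2"
    by (simp add: power2_eq_square algebra_simps)
  also have "\<dots> \<le> 2 ^ (2 * a + 4)"
    by (rule square_le_pow2) simp
  finally show ?thesis
    by blast
qed

lemma polynomial_le_pow2: "\<exists>r. c * (r + 1) ^ k \<le> (2::nat) ^ r"
proof -
  obtain j where j: "(c + k + 1) * (j + 1) \<le> (2::nat) ^ j"
    using linear_le_pow2 by blast
  define r where "r = (2::nat) ^ j - 1"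
  have r: "r + 1 = 2 ^ j"
    by (simp add: r_def)
  have "c + j * k + 1 \<le> (c + k + 1) * (j + 1)"
    by (simp add: algebra_simps)
  then have exponent: "c + j * k \<le> r"
    using j r by linarith
  have "c * (r + 1) ^ k = c * 2 ^ (j * k)"
    unfolding r by (simp add: power_mult)
  also have "\<dots> \<le> 2 ^ c * 2 ^ (j * k)"
    using less_exp[of c] by simp
  also have "\<dots> = 2 ^ (c + j * k)"
    by (simp add: power_add)
  also have "\<dots> \<le> 2 ^ r"
    using exponent by (rule power_increasing) simp
  finally show ?thesis ..
qed

lemma size_le_pow2:
  "16 * 2 ^ r * ((4 * 2 ^ r) ^ e + e) \<le> (2::nat) ^ (4 + r + (r + 3) * e)"
proof -
  have "4 * 2 ^ r = (2::nat) ^ (r + 2)"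
    by (simp add: power_add)
  then have "(4 * 2 ^ r) ^ e = (2::nat) ^ ((r + 2) * e)"
    by (simp only: power_mult)
  moreover have "e \<le> 2 ^ ((r + 2) * e) * e"
    by simp
  ultimately have "(4 * 2 ^ r) ^ e + e \<le> 2 ^ ((r + 2) * e) * (e + 1)"
    by simp
  also have "\<dots> \<le> 2 ^ ((r + 2) * e) * 2 ^ e"
    by (rule mult_le_mono2) (use Suc_leI[OF less_exp[of e]] in simp)
  finally have "16 * 2 ^ r * ((4 * 2 ^ r) ^ e + e) \<le> 2 ^ 4 * 2 ^ r * (2 ^ ((r + 2) * e) * 2 ^ e)"
    by simp
  also have "\<dots> = 2 ^ (4 + r + (r + 2) * e + e)"
    unfolding power_add by (simp only: mult.assoc)
  finally show ?thesis
    by (simp add: algebra_simps)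
qed

lemma razborov_parameters:
  "\<exists>m l. 1 \<le> l \<and> 16 * m * ((4 * m) ^ e + e) \<le> 2 ^ l \<and> 4 * ((2 * l) ^ d + 1)\<^sup>2 \<le> m"
proof -
  define K where "K = 8 * (e + 1)"
  obtain r where r: "16 * (K ^ d)\<^sup>2 * (r + 1) ^ (d * 2) \<le> (2::nat) ^ r"
    using polynomial_le_pow2 by blast
  define m where "m = (2::nat) ^ r"
  define l where "l = 4 + r + (r + 3) * e"
  have size: "16 * m * ((4 * m) ^ e + e) \<le> 2 ^ l"
    unfolding m_def l_def by (rule size_le_pow2)
  define X where "X = (2 * l) ^ d"
  have "1 \<le> X"
    by (simp add: X_def l_def)
  have "2 * l \<le> K * (r + 1)"
    by (simp add: l_def K_def algebra_simps)
  then have "X \<le> K ^ d * (r + 1) ^ d"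
    unfolding X_def power_mult_distrib[symmetric] by (rule power_mono) simp
  have "4 * (X + 1)\<^sup>2 \<le> 4 * (2 * X)\<^sup>2"
    using \<open>1 \<le> X\<close> by (intro mult_le_mono2 power_mono) simp_all
  also have "\<dots> = 16 * X\<^sup>2"
    by (simp add: power_mult_distrib)
  also have "\<dots> \<le> 16 * (K ^ d * (r + 1) ^ d)\<^sup>2"
    using \<open>X \<le> K ^ d * (r + 1) ^ d\<close> by (intro mult_le_mono2 power_mono) simp_all
  also have "\<dots> = 16 * (K ^ d)\<^sup>2 * (r + 1) ^ (d * 2)"
    by (simp only: power_mult_distrib power_mult mult.assoc)
  also have "\<dots> \<le> m"
    using r by (simp add: m_def)
  finally show ?thesis
    using size by (intro exI[of _ m] exI[of _ l]) (simp add: l_def X_def)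
qed

lemma chi_append:
  assumes "length x = n" "finite S"
  shows "chi S (x @ z) = chi (S \<inter> {..<n}) x * (\<Prod>i\<in>S - {..<n}. pm_one (z ! (i - n)))"
proof -
  have "chi S (x @ z) = chi (S \<inter> {..<n}) (x @ z) * chi (S - {..<n}) (x @ z)"
    unfolding chi_def using assms(2) by (rule prod.Int_Diff)
  also have "chi (S \<inter> {..<n}) (x @ z) = chi (S \<inter> {..<n}) x"
    unfolding chi_def using assms(1) by (intro prod.cong) (auto simp: nth_append)
  also have "chi (S - {..<n}) (x @ z) = (\<Prod>i\<in>S - {..<n}. pm_one (z ! (i - n)))"
    unfolding chi_def using assms(1) by (intro prod.cong) (auto simp: nth_append)
  finally show ?thesis .
qed

lemma poly_deg_le_append:
  assumes P: "poly_deg_le (n + k) D P" and z: "length z = k"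
  shows "poly_deg_le n D (\<lambda>x. P (x @ z))"
proof -
  obtain c where c: "\<forall>w. length w = n + k \<longrightarrow> P w = (\<Sum>S\<in>small_subsets (n + k) D. c S * chi S w)"
    using P unfolding poly_deg_le_def by blast
  define c' where "c' S = c S * (\<Prod>i\<in>S - {..<n}. pm_one (z ! (i - n)))" for S
  have "poly_deg_le n D (\<lambda>x. \<Sum>S\<in>small_subsets (n + k) D. c' S * chi (S \<inter> {..<n}) x)"
  proof (intro poly_deg_le_sum poly_deg_le_smult poly_deg_le_chi)
    fix S assume S: "S \<in> small_subsets (n + k) D"
    then have "card (S \<inter> {..<n}) \<le> card S"
      by (intro card_mono) (auto simp: finite_of_small_subsets)
    with S show "card (S \<inter> {..<n}) \<le> D"
      by (simp add: small_subsets_def)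
  qed auto
  then show ?thesis
  proof (rule poly_deg_le_cong)
    fix x :: "bool list" assume x: "length x = n"
    then have "P (x @ z) = (\<Sum>S\<in>small_subsets (n + k) D. c S * chi S (x @ z))"
      using c z by simp
    also have "\<dots> = (\<Sum>S\<in>small_subsets (n + k) D. c' S * chi (S \<inter> {..<n}) x)"
      using x by (intro sum.cong) (simp_all add: chi_append finite_of_small_subsets c'_def mult_ac)
    finally show "(\<Sum>S\<in>small_subsets (n + k) D. c' S * chi (S \<inter> {..<n}) x) = P (x @ z)"
      by simp
  qed
qed

definition pad :: "nat \<Rightarrow> nat \<Rightarrow> bool list" where
  "pad n t = replicate (n - t) True @ replicate t False"

lemma length_pad [simp]: "t \<le> n \<Longrightarrow> length (pad n t) = n"
  by (simp add: pad_def)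

lemma append_pad_in_MAJ_iff:
  assumes x: "length x = n" and t: "t < n"
  shows "x @ pad n t \<in> MAJ \<longleftrightarrow> t < count_list x True"
proof -
  have "count_list x True + count_list x False = n"
    using x by (induction x arbitrary: n) auto
  moreover have replicate: "count_list (replicate k b) b' = (if b = b' then k else 0)" for k b b'
    by (induction k) auto
  ultimately show ?thesis
    using t by (auto simp: MAJ_def pad_def replicate)
qed

lemma MAJ_circuit_threshold_approx:
  assumes wf: "circ_wf (n + n) C" and depth: "circ_depth C \<le> d" and l: "1 \<le> l" and t: "t < n"
    and MAJ: "\<forall>w. length w = n + n \<longrightarrow> (circ_out C w \<longleftrightarrow> w \<in> MAJ)"
  shows "\<exists>Q B. poly_deg_le n ((2 * l) ^ d) Q \<and> B \<subseteq> cube n \<and> 2 ^ l * card B \<le> length C * 2 ^ n \<and>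
    (\<forall>x\<in>cube n - B. Q x = of_bool (t < count_list x True))"
proof -
  define X where "X = (\<lambda>x. x @ pad n t) ` cube n"
  have inj: "inj_on (\<lambda>x. x @ pad n t) A" for A
    by (auto intro: inj_onI)
  obtain P B where P: "poly_deg_le (n + n) ((2 * l) ^ d) P" and B: "B \<subseteq> X"
    "2 ^ l * card B \<le> length C * card X" and val: "\<forall>x\<in>X - B. P x = of_bool (circ_out C x)"
    using razborov_circuit_approx[OF wf _ l depth, of X] by (auto simp: X_def)
  define B' where "B' = {x\<in>cube n. x @ pad n t \<in> B}"
  have "card B' = card ((\<lambda>x. x @ pad n t) ` B')"
    by (simp add: card_image[OF inj])
  also have "\<dots> \<le> card B"
    using B(1) by (intro card_mono) (auto simp: B'_def X_def intro: finite_subset)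
  finally have "2 ^ l * card B' \<le> 2 ^ l * card B"
    by simp
  also have "\<dots> \<le> length C * 2 ^ n"
    using B(2) by (simp add: X_def card_image[OF inj] card_cube)
  finally have "2 ^ l * card B' \<le> length C * 2 ^ n" .
  moreover have "poly_deg_le n ((2 * l) ^ d) (\<lambda>x. P (x @ pad n t))"
    using t by (intro poly_deg_le_append[OF P]) simp
  moreover have "P (x @ pad n t) = of_bool (t < count_list x True)" if "x \<in> cube n - B'" for x
    using that val MAJ t append_pad_in_MAJ_iff[of x n t]
    by (auto simp: X_def B'_def cube_def pad_def)
  ultimately show ?thesis
    by (intro exI[of _ "\<lambda>x. P (x @ pad n t)"] exI[of _ B']) (auto simp: B'_def)
qed

lemma parity_eq_threshold_sum:
  assumes "c \<le> n"
  shows "1 + (\<Sum>t<n. ((-1) ^ Suc t - (-1) ^ t) * of_bool (t < c)) = ((-1) ^ c :: 'a::comm_ring_1)"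
proof -
  have "(\<Sum>t<n. ((-1) ^ Suc t - (-1) ^ t) * of_bool (t < c))
      = (\<Sum>t\<in>{..<n} \<inter> {t. t < c}. (-1) ^ Suc t - (-1) ^ t :: 'a)"
    by (rule sum_mult_of_bool_eq) simp
  also have "{..<n} \<inter> {t. t < c} = {..<c}"
    using assms by auto
  also have "(\<Sum>t<c. (-1) ^ Suc t - (-1) ^ t :: 'a) = (-1) ^ c - 1"
    using sum_lessThan_telescope[of "\<lambda>t. (-1 :: 'a) ^ t" c] by simp
  finally show ?thesis
    by simp
qed

lemma chi_lessThan_length: "length x = n \<Longrightarrow> chi {..<n} x = (-1) ^ count_list x True"
proof (induction x arbitrary: n)
  case (Cons b x)
  have "chi {..<Suc (length x)} (b # x) = pm_one b * chi {..<length x} x"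
    unfolding chi_def by (simp only: prod.lessThan_Suc_shift nth_Cons_0 nth_Cons_Suc)
  then show ?case
    using Cons by (auto simp: pm_one_def)
qed (simp add: chi_def)

lemma threshold_combination_eq_parity:
  assumes x: "length x = n" and Q: "\<forall>t<n. Q t x = of_bool (t < count_list x True)"
  shows "1 + (\<Sum>t<n. ((-1) ^ Suc t - (-1) ^ t) * Q t x) = chi {..<n} x"
proof -
  have "1 + (\<Sum>t<n. ((-1) ^ Suc t - (-1) ^ t) * Q t x)
      = 1 + (\<Sum>t<n. ((-1) ^ Suc t - (-1) ^ t) * of_bool (t < count_list x True))"
    using Q by simp
  also have "\<dots> = (-1) ^ count_list x True"
    using count_le_length[of x True] x by (intro parity_eq_threshold_sum) simp
  also have "\<dots> = chi {..<n} x"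
    using x by (simp add: chi_lessThan_length)
  finally show ?thesis .
qed

lemma MAJ_circuit_thresholds:
  assumes wf: "circ_wf (n + n) C" and depth: "circ_depth C \<le> d" and l: "1 \<le> l"
    and MAJ: "\<forall>w. length w = n + n \<longrightarrow> (circ_out C w \<longleftrightarrow> w \<in> MAJ)"
  shows "\<exists>Q B. \<forall>t<n. poly_deg_le n ((2 * l) ^ d) (Q t) \<and> B t \<subseteq> cube n \<and>
    2 ^ l * card (B t) \<le> length C * 2 ^ n \<and>
    (\<forall>x\<in>cube n - B t. Q t x = of_bool (t < count_list x True))"
proof -
  have "\<exists>Q B. t < n \<longrightarrow> poly_deg_le n ((2 * l) ^ d) Q \<and> B \<subseteq> cube n \<and>
      2 ^ l * card B \<le> length C * 2 ^ n \<and>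
      (\<forall>x\<in>cube n - B. Q x = of_bool (t < count_list x True))" for t
    using MAJ_circuit_threshold_approx[OF wf depth l _ MAJ, of t] by blast
  then obtain Q where "\<forall>t. \<exists>B. t < n \<longrightarrow> poly_deg_le n ((2 * l) ^ d) (Q t) \<and>
      B \<subseteq> cube n \<and> 2 ^ l * card B \<le> length C * 2 ^ n \<and>
      (\<forall>x\<in>cube n - B. Q t x = of_bool (t < count_list x True))"
    by (metis choice)
  then obtain B where "\<forall>t. t < n \<longrightarrow> poly_deg_le n ((2 * l) ^ d) (Q t) \<and>
      B t \<subseteq> cube n \<and> 2 ^ l * card (B t) \<le> length C * 2 ^ n \<and>
      (\<forall>x\<in>cube n - B t. Q t x = of_bool (t < count_list x True))"
    by (metis choice)
  then show ?thesis
    by blast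
qed

lemma MAJ_circuit_parity_approx:
  assumes wf: "circ_wf (n + n) C" and depth: "circ_depth C \<le> d" and l: "1 \<le> l"
    and MAJ: "\<forall>w. length w = n + n \<longrightarrow> (circ_out C w \<longleftrightarrow> w \<in> MAJ)"
  shows "\<exists>H G. poly_deg_le n ((2 * l) ^ d) H \<and> G \<subseteq> cube n \<and> (\<forall>x\<in>G. H x = chi {..<n} x) \<and>
    2 ^ l * card (cube n - G) \<le> n * (length C * 2 ^ n)"
proof -
  obtain Q B where Q: "\<And>t. t < n \<Longrightarrow> poly_deg_le n ((2 * l) ^ d) (Q t)"
    and B: "\<And>t. t < n \<Longrightarrow> B t \<subseteq> cube n" "\<And>t. t < n \<Longrightarrow> 2 ^ l * card (B t) \<le> length C * 2 ^ n"
    and threshold: "\<And>t x. t < n \<Longrightarrow> x \<in> cube n - B t \<Longrightarrow> Q t x = of_bool (t < count_list x True)"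
    using MAJ_circuit_thresholds[OF wf depth l MAJ] by metis
  define G where "G = cube n - (\<Union>t<n. B t)"
  define H where "H x = 1 + (\<Sum>t<n. ((-1) ^ Suc t - (-1) ^ t) * Q t x)" for x
  have "poly_deg_le n ((2 * l) ^ d) H"
    unfolding H_def[abs_def]
    by (intro poly_deg_le_add poly_deg_le_const poly_deg_le_sum poly_deg_le_smult Q) simp_all
  moreover have "H x = chi {..<n} x" if "x \<in> G" for x
    using that threshold threshold_combination_eq_parity[of x n Q]
    by (simp add: H_def G_def cube_def)
  moreover have "2 ^ l * card (cube n - G) \<le> n * (length C * 2 ^ n)"
  proof -
    have "(\<Union>t<n. B t) \<subseteq> cube n"
      using B(1) by auto
    then have "finite (\<Union>t<n. B t)"
      using finite_cube by (rule finite_subset)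
    then have "card (cube n - G) \<le> card (\<Union>t<n. B t)"
      by (rule card_mono) (auto simp: G_def)
    also have "\<dots> \<le> (\<Sum>t<n. card (B t))"
      by (rule card_UN_le) simp
    finally have "2 ^ l * card (cube n - G) \<le> 2 ^ l * (\<Sum>t<n. card (B t))"
      by (rule mult_le_mono2)
    also have "\<dots> = (\<Sum>t<n. 2 ^ l * card (B t))"
      by (rule sum_distrib_left)
    also have "\<dots> \<le> (\<Sum>t<n. length C * 2 ^ n)"
      using B(2) by (intro sum_mono) simp
    finally show ?thesis
      by simp
  qed
  moreover have "G \<subseteq> cube n"
    by (auto simp: G_def)
  ultimately show ?thesis
    by blast
qed

lemma no_small_MAJ_circuit:
  assumes wf: "circ_wf (4 * m) C" and size: "length C \<le> s" and depth: "circ_depth C \<le> d"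
    and MAJ: "\<forall>w. length w = 4 * m \<longrightarrow> (circ_out C w \<longleftrightarrow> w \<in> MAJ)"
    and l: "1 \<le> l" and s: "16 * m * s \<le> 2 ^ l" and m: "4 * ((2 * l) ^ d + 1)\<^sup>2 \<le> m"
  shows False
proof -
  define n where "n = 2 * m"
  have "4 * m = n + n"
    by (simp add: n_def)
  then obtain H G where H: "poly_deg_le n ((2 * l) ^ d) H" and G: "G \<subseteq> cube n"
    and parity: "\<forall>x\<in>G. H x = chi {..<n} x"
    and few_errors: "2 ^ l * card (cube n - G) \<le> n * (length C * 2 ^ n)"
    using MAJ_circuit_parity_approx[of n C d l] wf depth l MAJ by auto
  have "8 * card G < 7 * 4 ^ m"
    using card_parity_agreement_lt[of m "(2 * l) ^ d" H G] H G parity m by (simp add: n_def)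
  moreover have "8 * card (cube n - G) \<le> 4 ^ m"
  proof -
    have "n * s * (8 * card (cube n - G)) = 16 * m * s * card (cube n - G)"
      by (simp add: n_def)
    also have "\<dots> \<le> 2 ^ l * card (cube n - G)"
      using s by (rule mult_le_mono1)
    also have "\<dots> \<le> n * s * 4 ^ m"
      using few_errors size order_trans by (fastforce simp: n_def power_mult)
    finally have "n * s * (8 * card (cube n - G)) \<le> n * s * 4 ^ m" .
    moreover have "0 < length C"
      using wf by (simp add: circ_wf_def)
    moreover have "1 \<le> ((2 * l) ^ d + 1)\<^sup>2"
      by simp
    ultimately show ?thesis
      using size m by (simp add: n_def)
  qed
  moreover have "card (cube n - G) = 4 ^ m - card G"
    using G by (simp add: card_Diff_subset finite_subset card_cube n_def power_mult)
  ultimately show False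
    by linarith
qed

theorem MAJ_notin_AC0: "MAJ \<notin> AC0"
proof
  assume "MAJ \<in> AC0"
  then obtain C d e
    where C: "\<forall>n. circ_wf n (C n) \<and> circ_size (C n) \<le> n ^ e + e \<and> circ_depth (C n) \<le> d"
    and MAJ: "\<forall>w. circ_out (C (length w)) w \<longleftrightarrow> w \<in> MAJ"
    unfolding AC0_def by blast
  obtain m l where "1 \<le> l" "16 * m * ((4 * m) ^ e + e) \<le> 2 ^ l" "4 * ((2 * l) ^ d + 1)\<^sup>2 \<le> m"
    using razborov_parameters by blast
  moreover have "length (C (4 * m)) \<le> (4 * m) ^ e + e"
    using C length_le_circ_size order_trans by blast
  moreover have "\<forall>w. length w = 4 * m \<longrightarrow> (circ_out (C (4 * m)) w \<longleftrightarrow> w \<in> MAJ)"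
    using MAJ by metis
  ultimately show False
    using C by (intro no_small_MAJ_circuit[of m "C (4 * m)" "(4 * m) ^ e + e" d l]) auto
qed

theorem proposition3:
  shows "\<not> (T_sat_float \<subseteq> AC0) \<and> MAJ \<in> T_sat_float \<and> MAJ \<notin> AC0"
  using MAJ_in_T_sat_float MAJ_notin_AC0 by blast

end
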